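(* Let $G$ be a proper interval graph with no twin vertices, let $\sigma$ be a proper interval ordering of $G$, let each node of the line-incompatibility graph $\widehat{G}$ carry a positive weight, and let $I_{\widehat{G}}$ be a maximum-weight independent set of $\widehat{G}$. Let $x,y,z$ be vertices of $G$ with $x\prec y\prec z$ in $\sigma$. If $xz\in I_{\widehat{G}}$, then $xy\in I_{\widehat{G}}$ or $yz\in I_{\widehat{G}}$.
   Context: All graphs are finite, simple and undirected. Two adjacent vertices $u,v$ are twins if $N[u]=N[v]$. A vertex ordering $\sigma$ of $G$ is a proper interval ordering if for all vertices $x\prec y\prec z$ in $\sigma$, $\{x,z\}\in E(G)$ implies $\{x,y\},\{y,z\}\in E(G)$; a graph is a proper interval graph if and only if it admits a proper interval ordering. The line-incompatibility graph $\widehat{G}$ of $G$ has one node $uv$ for each edge $\{u,v\}$ of $G$, two nodes being adjacent iff the corresponding edges are of the form $\{u,v\},\{v,w\}$ with $\{u,w\}\notin E(G)$. A maximum-weight independent set is an independent set maximizing the total weight of its nodes. *)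

theory Defs
  imports Complex_Main
begin

definition simple_graph :: "'a set \<Rightarrow> 'a set set \<Rightarrow> bool" where
  "simple_graph V E \<longleftrightarrow> finite V \<and> (\<forall>e\<in>E. \<exists>u v. e = {u, v} \<and> u \<noteq> v \<and> u \<in> V \<and> v \<in> V)"

definition closed_nbhd :: "'a set \<Rightarrow> 'a set set \<Rightarrow> 'a \<Rightarrow> 'a set" where
  "closed_nbhd V E u = {v \<in> V. v = u \<or> {u, v} \<in> E}"

definition twins :: "'a set \<Rightarrow> 'a set set \<Rightarrow> 'a \<Rightarrow> 'a \<Rightarrow> bool" where
  "twins V E u v \<longleftrightarrow> {u, v} \<in> E \<and> closed_nbhd V E u = closed_nbhd V E v"

definition no_twins :: "'a set \<Rightarrow> 'a set set \<Rightarrow> bool" where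
  "no_twins V E \<longleftrightarrow> (\<forall>u\<in>V. \<forall>v\<in>V. \<not> twins V E u v)"

definition prec :: "'a list \<Rightarrow> 'a \<Rightarrow> 'a \<Rightarrow> bool" where
  "prec \<sigma> x y \<longleftrightarrow> (\<exists>i j. i < j \<and> j < length \<sigma> \<and> \<sigma> ! i = x \<and> \<sigma> ! j = y)"

definition vertex_ordering :: "'a set \<Rightarrow> 'a list \<Rightarrow> bool" where
  "vertex_ordering V \<sigma> \<longleftrightarrow> distinct \<sigma> \<and> set \<sigma> = V"

definition proper_interval_ordering :: "'a set \<Rightarrow> 'a set set \<Rightarrow> 'a list \<Rightarrow> bool" where
  "proper_interval_ordering V E \<sigma> \<longleftrightarrow> vertex_ordering V \<sigma> \<and>
     (\<forall>x y z. prec \<sigma> x y \<and> prec \<sigma> y z \<and> {x, z} \<in> E \<longrightarrow> {x, y} \<in> E \<and> {y, z} \<in> E)"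

definition proper_interval_graph :: "'a set \<Rightarrow> 'a set set \<Rightarrow> bool" where
  "proper_interval_graph V E \<longleftrightarrow> simple_graph V E \<and> (\<exists>\<sigma>. proper_interval_ordering V E \<sigma>)"

definition lig_adj :: "'a set set \<Rightarrow> 'a set \<Rightarrow> 'a set \<Rightarrow> bool" where
  "lig_adj E e f \<longleftrightarrow> e \<in> E \<and> f \<in> E \<and>
     (\<exists>u v w. e = {u, v} \<and> f = {v, w} \<and> u \<noteq> w \<and> {u, w} \<notin> E)"

definition lig_independent :: "'a set set \<Rightarrow> 'a set set \<Rightarrow> bool" where
  "lig_independent E I \<longleftrightarrow> I \<subseteq> E \<and> (\<forall>e\<in>I. \<forall>f\<in>I. \<not> lig_adj E e f)"

definition lig_max_weight_independent :: "'a set set \<Rightarrow> ('a set \<Rightarrow> real) \<Rightarrow> 'a set set \<Rightarrow> bool" where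
  "lig_max_weight_independent E w I \<longleftrightarrow> lig_independent E I \<and>
     (\<forall>J. lig_independent E J \<longrightarrow> sum w J \<le> sum w I)"

end

theory Submission
  imports Defs
begin

text \<open>Suppose \<open>xz \<in> I\<close> but \<open>xy, yz \<notin> I\<close>. Since all weights are positive, a maximum-weight
  independent set cannot be enlarged, so \<open>xy\<close> is incompatible with some \<open>f \<in> I\<close> and \<open>yz\<close> with
  some \<open>g \<in> I\<close>. As \<open>f\<close> and \<open>g\<close> are compatible with \<open>xz\<close>, the proper interval ordering forces
  \<open>f = yu\<close> with \<open>z \<prec> u\<close>, \<open>xu \<notin> E\<close>, and symmetrically \<open>g = vy\<close> with \<open>v \<prec> x\<close>, \<open>vz \<notin> E\<close>.
  Then \<open>v \<prec> z \<prec> u\<close> and \<open>vz \<notin> E\<close> give \<open>vu \<notin> E\<close>, so \<open>g\<close> and \<open>f\<close> are incompatible, a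
  contradiction.\<close>

lemma prec_in_set: "prec s a b \<Longrightarrow> a \<in> set s \<and> b \<in> set s"
  unfolding prec_def by auto

lemma prec_trans: "distinct s \<Longrightarrow> prec s a b \<Longrightarrow> prec s b c \<Longrightarrow> prec s a c"
  unfolding prec_def by (metis dual_order.strict_trans nth_eq_iff_index_eq)

lemma prec_asym: "distinct s \<Longrightarrow> prec s a b \<Longrightarrow> \<not> prec s b a"
  unfolding prec_def by (metis dual_order.strict_trans nth_eq_iff_index_eq order_less_asym)

lemma prec_total: "a \<in> set s \<Longrightarrow> b \<in> set s \<Longrightarrow> a \<noteq> b \<Longrightarrow> prec s a b \<or> prec s b a"
  unfolding prec_def by (metis in_set_conv_nth linorder_neqE_nat)

lemma prec_rev: "prec (rev s) a b \<longleftrightarrow> prec s b a"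
proof -
  have "prec (rev s) a b" if "prec s b a" for s :: "'a list" and a b
  proof -
    from that obtain i j where "i < j" "j < length s" "s ! i = b" "s ! j = a"
      unfolding prec_def by blast
    then show ?thesis
      unfolding prec_def
      by (intro exI[of _ "length s - 1 - j"] exI[of _ "length s - 1 - i"]) (auto simp: rev_nth)
  qed
  from this[of s b a] this[of "rev s" a b] show ?thesis by auto
qed

lemma proper_interval_ordering_rev:
  assumes "proper_interval_ordering V E \<sigma>"
  shows "proper_interval_ordering V E (rev \<sigma>)"
  unfolding proper_interval_ordering_def
proof (intro conjI allI impI)
  show "vertex_ordering V (rev \<sigma>)"
    using assms unfolding proper_interval_ordering_def vertex_ordering_def by simp
  fix x y z
  assume "prec (rev \<sigma>) x y \<and> prec (rev \<sigma>) y z \<and> {x, z} \<in> E"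
  then have "prec \<sigma> z y" "prec \<sigma> y x" "{z, x} \<in> E"
    unfolding prec_rev by (simp_all add: insert_commute)
  with assms have "{z, y} \<in> E \<and> {y, x} \<in> E"
    unfolding proper_interval_ordering_def by blast
  then show "{x, y} \<in> E" "{y, z} \<in> E" by (simp_all add: insert_commute)
qed

lemma proper_interval_orderingD:
  "proper_interval_ordering V E \<sigma> \<Longrightarrow> prec \<sigma> a b \<Longrightarrow> prec \<sigma> b c \<Longrightarrow> {a, c} \<in> E
    \<Longrightarrow> {a, b} \<in> E \<and> {b, c} \<in> E"
  unfolding proper_interval_ordering_def by blast

lemma proper_interval_ordering_distinct: "proper_interval_ordering V E \<sigma> \<Longrightarrow> distinct \<sigma>"
  and proper_interval_ordering_set: "proper_interval_ordering V E \<sigma> \<Longrightarrow> set \<sigma> = V"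
  unfolding proper_interval_ordering_def vertex_ordering_def by blast+

lemma simple_graph_edgeD:
  assumes "simple_graph V E" "{a, b} \<in> E"
  shows "a \<in> V"
proof -
  obtain u v where "{a, b} = {u, v}" "u \<in> V" "v \<in> V"
    using assms unfolding simple_graph_def by blast
  then show "a \<in> V" by (auto simp: doubleton_eq_iff)
qed

lemma simple_graph_finite_edges:
  assumes "simple_graph V E"
  shows "finite E"
proof -
  have "E \<subseteq> Pow V" "finite V" using assms unfolding simple_graph_def by auto
  then show ?thesis by (simp add: finite_subset)
qed

lemma lig_adj_sym: "lig_adj E e f \<longleftrightarrow> lig_adj E f e"
proof -
  have "lig_adj E f e" if "lig_adj E e f" for e f
  proof -
    from that obtain u v w where "e \<in> E" "f \<in> E" "e = {u, v}" "f = {v, w}" "u \<noteq> w" "{u, w} \<notin> E"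
      unfolding lig_adj_def by blast
    moreover have "f = {w, v}" "e = {v, u}" "w \<noteq> u" "{w, u} \<notin> E"
      using calculation by (simp_all add: insert_commute)
    ultimately show ?thesis unfolding lig_adj_def by blast
  qed
  then show ?thesis by blast
qed

lemma lig_adj_irrefl: "\<not> lig_adj E e e"
  unfolding lig_adj_def by (auto simp: doubleton_eq_iff)

lemma lig_adj_doubletonE:
  assumes "lig_adj E {x, y} f"
  obtains u where "f = {y, u}" "u \<noteq> x" "{x, u} \<notin> E"
    | u where "f = {x, u}" "u \<noteq> y" "{y, u} \<notin> E"
proof -
  from assms obtain a b u where ab: "{x, y} = {a, b}" and "f = {b, u}" "a \<noteq> u" "{a, u} \<notin> E"
    unfolding lig_adj_def by blast
  from ab consider "a = x" "b = y" | "a = y" "b = x" by (auto simp: doubleton_eq_iff)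
  then show ?thesis using that \<open>f = {b, u}\<close> \<open>a \<noteq> u\<close> \<open>{a, u} \<notin> E\<close> by cases blast+
qed

lemma lig_max_weight_independent_conflict:
  assumes "finite E" "\<forall>e\<in>E. w e > 0" "lig_max_weight_independent E w I"
    and "e \<in> E" "e \<notin> I"
  shows "\<exists>f\<in>I. lig_adj E e f"
proof (rule ccontr)
  assume "\<not> (\<exists>f\<in>I. lig_adj E e f)"
  with assms(3,4) have "lig_independent E (insert e I)"
    unfolding lig_max_weight_independent_def lig_independent_def
    by (auto simp: lig_adj_sym lig_adj_irrefl)
  with assms(3) have "sum w (insert e I) \<le> sum w I"
    unfolding lig_max_weight_independent_def by blast
  moreover have "finite I"
    using assms(1,3) finite_subset
    unfolding lig_max_weight_independent_def lig_independent_def by blast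
  ultimately show False using assms(2,4,5) by fastforce
qed

lemma lig_adjI: "{u, v} \<in> E \<Longrightarrow> {v, w} \<in> E \<Longrightarrow> u \<noteq> w \<Longrightarrow> {u, w} \<notin> E \<Longrightarrow> lig_adj E {u, v} {v, w}"
  unfolding lig_adj_def by blast

lemma lig_adj_inner_edge_beyond:
  assumes G: "simple_graph V E" and \<sigma>: "proper_interval_ordering V E \<sigma>"
    and xy: "prec \<sigma> x y" and yz: "prec \<sigma> y z" and xz: "{x, z} \<in> E"
    and adj: "lig_adj E {x, y} f" and compatible: "\<not> lig_adj E f {x, z}"
  shows "\<exists>u. f = {y, u} \<and> prec \<sigma> z u \<and> {x, u} \<notin> E"
proof -
  note set\<sigma> = proper_interval_ordering_set[OF \<sigma>]
  have yzE: "{y, z} \<in> E" using proper_interval_orderingD[OF \<sigma> xy yz xz] by blast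
  have "x \<in> set \<sigma>" "y \<in> set \<sigma>" "z \<in> set \<sigma>"
    using prec_in_set[OF xy] prec_in_set[OF yz] by blast+
  have fE: "f \<in> E" using adj unfolding lig_adj_def by blast
  from adj show ?thesis
  proof (cases rule: lig_adj_doubletonE)
    case (1 u)
    then have uyE: "{u, y} \<in> E" using fE by (simp add: insert_commute)
    then have "u \<in> set \<sigma>" using simple_graph_edgeD[OF G uyE] set\<sigma> by simp
    have "\<not> prec \<sigma> u z"
    proof
      assume uz: "prec \<sigma> u z"
      have "prec \<sigma> u x \<or> prec \<sigma> x u"
        using prec_total[OF \<open>u \<in> set \<sigma>\<close> \<open>x \<in> set \<sigma>\<close> \<open>u \<noteq> x\<close>] .
      then have "{x, u} \<in> E"
      proof
        assume "prec \<sigma> u x"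
        then show ?thesis
          using proper_interval_orderingD[OF \<sigma> _ xy uyE] by (simp add: insert_commute)
      next
        assume "prec \<sigma> x u"
        then show ?thesis using proper_interval_orderingD[OF \<sigma> _ uz xz] by blast
      qed
      with \<open>{x, u} \<notin> E\<close> show False by contradiction
    qed
    moreover have "u \<noteq> z" using xz \<open>{x, u} \<notin> E\<close> by blast
    ultimately have "prec \<sigma> z u"
      using prec_total[OF \<open>u \<in> set \<sigma>\<close> \<open>z \<in> set \<sigma>\<close>] by blast
    with 1 show ?thesis by blast
  next
    case (2 u)
    then have uxE: "{u, x} \<in> E" and f: "f = {u, x}" using fE by (simp_all add: insert_commute)
    have "u \<noteq> z" using yzE \<open>{y, u} \<notin> E\<close> by blast
    have uzE: "{u, z} \<in> E"
    proof (rule ccontr)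
      assume "{u, z} \<notin> E"
      with lig_adjI[OF uxE xz \<open>u \<noteq> z\<close>] compatible f show False by blast
    qed
    have "u \<in> set \<sigma>" using simple_graph_edgeD[OF G uzE] set\<sigma> by simp
    have "prec \<sigma> u y \<or> prec \<sigma> y u"
      using prec_total[OF \<open>u \<in> set \<sigma>\<close> \<open>y \<in> set \<sigma>\<close> \<open>u \<noteq> y\<close>] .
    then have "{y, u} \<in> E"
    proof
      assume "prec \<sigma> u y"
      then show ?thesis
        using proper_interval_orderingD[OF \<sigma> _ yz uzE] by (simp add: insert_commute)
    next
      assume "prec \<sigma> y u"
      then show ?thesis using proper_interval_orderingD[OF \<sigma> xy _ fE[unfolded 2(1)]] by blast
    qed
    with \<open>{y, u} \<notin> E\<close> show ?thesis by contradiction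
  qed
qed

lemma lig_max_weight_independent_inner_edge:
  assumes G: "simple_graph V E" and \<sigma>: "proper_interval_ordering V E \<sigma>"
    and "\<forall>e\<in>E. w e > 0" and I: "lig_max_weight_independent E w I"
    and xy: "prec \<sigma> x y" and yz: "prec \<sigma> y z" and "{x, z} \<in> I" and "{x, y} \<notin> I"
  shows "\<exists>u. {y, u} \<in> I \<and> prec \<sigma> z u \<and> {x, u} \<notin> E"
proof -
  have "I \<subseteq> E" and indep: "\<And>e f. e \<in> I \<Longrightarrow> f \<in> I \<Longrightarrow> \<not> lig_adj E e f"
    using I unfolding lig_max_weight_independent_def lig_independent_def by blast+
  with \<open>{x, z} \<in> I\<close> have xz: "{x, z} \<in> E" by blast
  then have "{x, y} \<in> E" using proper_interval_orderingD[OF \<sigma> xy yz] by blast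
  then obtain f where "f \<in> I" "lig_adj E {x, y} f"
    using lig_max_weight_independent_conflict[OF simple_graph_finite_edges[OF G] assms(3) I]
      \<open>{x, y} \<notin> I\<close> by blast
  with lig_adj_inner_edge_beyond[OF G \<sigma> xy yz xz] indep[OF _ \<open>{x, z} \<in> I\<close>]
  show ?thesis by blast
qed

lemma lig_adj_across:
  assumes \<sigma>: "proper_interval_ordering V E \<sigma>"
    and vz: "prec \<sigma> v z" and zu: "prec \<sigma> z u" and "{v, z} \<notin> E"
    and "{v, y} \<in> E" and "{y, u} \<in> E"
  shows "lig_adj E {v, y} {y, u}"
proof (rule lig_adjI)
  show "{v, u} \<notin> E" using proper_interval_orderingD[OF \<sigma> vz zu] \<open>{v, z} \<notin> E\<close> by blast
  have "prec \<sigma> v u" using prec_trans[OF proper_interval_ordering_distinct[OF \<sigma>] vz zu] .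
  then show "v \<noteq> u" using prec_asym[OF proper_interval_ordering_distinct[OF \<sigma>]] by blast
qed fact+

theorem lemma7:
  fixes V :: "'a set" and E :: "'a set set" and \<sigma> :: "'a list"
    and w :: "'a set \<Rightarrow> real" and I :: "'a set set" and x y z :: 'a
  assumes "proper_interval_graph V E"
    and "no_twins V E"
    and "proper_interval_ordering V E \<sigma>"
    and "\<forall>e\<in>E. w e > 0"
    and "lig_max_weight_independent E w I"
    and "prec \<sigma> x y" and "prec \<sigma> y z"
    and "{x, z} \<in> I"
  shows "{x, y} \<in> I \<or> {y, z} \<in> I"
proof (rule ccontr)
  assume "\<not> ({x, y} \<in> I \<or> {y, z} \<in> I)"
  then have "{x, y} \<notin> I" "{z, y} \<notin> I" by (auto simp: insert_commute)
  have G: "simple_graph V E" using assms(1) unfolding proper_interval_graph_def by blast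
  obtain u where "{y, u} \<in> I" "prec \<sigma> z u"
    using lig_max_weight_independent_inner_edge[OF G assms(3-8) \<open>{x, y} \<notin> I\<close>] by blast
  have "prec (rev \<sigma>) z y" "prec (rev \<sigma>) y x" "{z, x} \<in> I"
    using assms(6-8) by (simp_all add: prec_rev insert_commute)
  then obtain v where "{y, v} \<in> I" "prec \<sigma> v x" "{z, v} \<notin> E"
    using lig_max_weight_independent_inner_edge[OF G proper_interval_ordering_rev[OF assms(3)]
        assms(4,5) _ _ _ \<open>{z, y} \<notin> I\<close>]
    by (auto simp: prec_rev)
  have "prec \<sigma> v z"
    using prec_trans[OF proper_interval_ordering_distinct[OF assms(3)]] \<open>prec \<sigma> v x\<close> assms(6,7)
    by blast
  have "{v, y} \<in> I" "{v, z} \<notin> E"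
    using \<open>{y, v} \<in> I\<close> \<open>{z, v} \<notin> E\<close> by (simp_all add: insert_commute)
  have "I \<subseteq> E" and indep: "\<And>e f. e \<in> I \<Longrightarrow> f \<in> I \<Longrightarrow> \<not> lig_adj E e f"
    using assms(5) unfolding lig_max_weight_independent_def lig_independent_def by blast+
  then have "lig_adj E {v, y} {y, u}"
    using lig_adj_across[OF assms(3) \<open>prec \<sigma> v z\<close> \<open>prec \<sigma> z u\<close> \<open>{v, z} \<notin> E\<close>]
      \<open>{v, y} \<in> I\<close> \<open>{y, u} \<in> I\<close> by blast
  with indep[OF \<open>{v, y} \<in> I\<close> \<open>{y, u} \<in> I\<close>] show False by contradiction
qed

end
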